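(* Let $q$ be a prime power. (i) If $C$ is an $[n,k,d]$ linear code over $\mathbb{F}_q$ whose Euclidean hull $C\cap C^{\perp_E}$ has dimension $l$, then there exists a set $T$ of $l$ coordinate positions such that the shortened code $C_T$ of $C$ on $T$ is a Euclidean LCD $[n-l,k-l,d']$ code with $d'\ge d$. (ii) If $C$ is an $[n,k,d]$ linear code over $\mathbb{F}_{q^2}$ whose Hermitian hull $C\cap C^{\perp_H}$ has dimension $l$, then there exists a set $T$ of $l$ coordinate positions such that the shortened code $C_T$ of $C$ on $T$ is a Hermitian LCD $[n-l,k-l,d']$ code with $d'\ge d$.
   Context: An $[n,k,d]$ linear code over a finite field $F$ is a $k$-dimensional subspace of $F^n$ with minimum nonzero Hamming weight $d$. Euclidean inner product on $\mathbb{F}_q^n$: $\langle x,y\rangle_E=\sum x_iy_i$; Hermitian inner product on $\mathbb{F}_{q^2}^n$: $\langle x,y\rangle_H=\sum x_iy_i^q$; $C^{\perp_E}$, $C^{\perp_H}$ are the corresponding dual codes. The (Euclidean/Hermitian) hull of $C$ is $C\cap C^{\perp}$; $C$ is (Euclidean/Hermitian) LCD if its hull is $\{0\}$. For a set $T$ of $t$ coordinate positions, let $C(T)$ be the subcode of codewords that are $0$ on all positions of $T$; the shortened code $C_T$ is obtained from $C(T)$ by deleting the coordinates in $T$, and has length $n-t$. *)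

theory Defs
  imports Main "HOL-Computational_Algebra.Primes" "HOL-Library.Function_Algebras" "HOL-Library.Extended_Nat"
begin

text \<open>Vectors with coordinates indexed by a finite set I of positions are
functions nat => 'a vanishing outside I (so the ambient space is F^I, of
length card I).\<close>

definition vecs :: "nat set \<Rightarrow> (nat \<Rightarrow> 'a::zero) set" where
  "vecs I = {x. \<forall>i. i \<notin> I \<longrightarrow> x i = 0}"

definition sc :: "'a::times \<Rightarrow> (nat \<Rightarrow> 'a) \<Rightarrow> (nat \<Rightarrow> 'a)" where
  "sc c x = (\<lambda>i. c * x i)"

definition lin_code :: "nat set \<Rightarrow> (nat \<Rightarrow> 'a::field) set \<Rightarrow> bool" where
  "lin_code I C \<longleftrightarrow> finite I \<and> C \<subseteq> vecs I \<and> 0 \<in> C \<and>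
     (\<forall>x\<in>C. \<forall>y\<in>C. x + y \<in> C) \<and> (\<forall>c. \<forall>x\<in>C. sc c x \<in> C)"

definition cdim :: "(nat \<Rightarrow> 'a::field) set \<Rightarrow> nat" where
  "cdim C = vector_space.dim sc C"

definition wt :: "nat set \<Rightarrow> (nat \<Rightarrow> 'a::zero) \<Rightarrow> nat" where
  "wt I x = card {i \<in> I. x i \<noteq> 0}"

text \<open>Minimum nonzero Hamming weight (infinity for the zero code).\<close>
definition min_dist :: "nat set \<Rightarrow> (nat \<Rightarrow> 'a::zero) set \<Rightarrow> enat" where
  "min_dist I C = (INF x\<in>C - {0}. enat (wt I x))"

definition e_ip :: "nat set \<Rightarrow> (nat \<Rightarrow> 'a::comm_ring_1) \<Rightarrow> (nat \<Rightarrow> 'a) \<Rightarrow> 'a" where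
  "e_ip I x y = (\<Sum>i\<in>I. x i * y i)"

definition e_dual :: "nat set \<Rightarrow> (nat \<Rightarrow> 'a::comm_ring_1) set \<Rightarrow> (nat \<Rightarrow> 'a) set" where
  "e_dual I C = {y \<in> vecs I. \<forall>x\<in>C. e_ip I x y = 0}"

definition h_ip :: "nat \<Rightarrow> nat set \<Rightarrow> (nat \<Rightarrow> 'a::comm_ring_1) \<Rightarrow> (nat \<Rightarrow> 'a) \<Rightarrow> 'a" where
  "h_ip q I x y = (\<Sum>i\<in>I. x i * y i ^ q)"

definition h_dual :: "nat \<Rightarrow> nat set \<Rightarrow> (nat \<Rightarrow> 'a::comm_ring_1) set \<Rightarrow> (nat \<Rightarrow> 'a) set" where
  "h_dual q I C = {y \<in> vecs I. \<forall>x\<in>C. h_ip q I x y = 0}"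

definition e_LCD :: "nat set \<Rightarrow> (nat \<Rightarrow> 'a::comm_ring_1) set \<Rightarrow> bool" where
  "e_LCD I C \<longleftrightarrow> C \<inter> e_dual I C = {0}"

definition h_LCD :: "nat \<Rightarrow> nat set \<Rightarrow> (nat \<Rightarrow> 'a::comm_ring_1) set \<Rightarrow> bool" where
  "h_LCD q I C \<longleftrightarrow> C \<inter> h_dual q I C = {0}"

definition shorten :: "nat set \<Rightarrow> (nat \<Rightarrow> 'a::zero) set \<Rightarrow> nat set \<Rightarrow> (nat \<Rightarrow> 'a) set" where
  "shorten I C T = (\<lambda>x. \<lambda>i. if i \<in> I - T then x i else 0) ` {x \<in> C. \<forall>i\<in>T. x i = 0}"

definition prime_power :: "nat \<Rightarrow> bool" where
  "prime_power q \<longleftrightarrow> (\<exists>p m. prime (p::nat) \<and> m \<ge> 1 \<and> q = p ^ m)"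

end

theory Submission
  imports Defs "HOL-Number_Theory.Residues"
begin

(* Let H = C \<inter> C\<^sup>\<bottom> be the hull, of dimension l. A minimal set T of coordinates on which no
   nonzero word of H vanishes identically has exactly l elements, and restriction to T maps H
   bijectively onto F\<^sup>T (T is an information set of H). Hence C = H \<oplus> C(T), so the shortened
   code has dimension k - l, and shortening never changes weights. A word y of C(T) orthogonal to
   C(T) is also orthogonal to H \<subseteq> C\<^sup>\<bottom>, because both inner products have the shape
   \<Sum> x\<^sub>i \<sigma>(y\<^sub>i) for a field involution \<sigma> (the identity, resp. a \<mapsto> a\<^sup>q on GF(q\<^sup>2)) and are
   therefore reflexive. So y lies in the hull and vanishes on T, whence y = 0. *)

lemma field_power_card_eq_self:
  fixes x :: "'a::field"
  assumes "finite (UNIV :: 'a set)"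
  shows "x ^ card (UNIV :: 'a set) = x"
proof (cases "x = 0")
  case True
  then show ?thesis
    using assms by (simp add: finite_UNIV_card_ge_0)
next
  case False
  define G :: "'a monoid" where "G = \<lparr>carrier = UNIV - {0 :: 'a}, mult = (*), one = 1\<rparr>"
  have "group G"
    by (rule groupI) (auto simp: G_def intro!: bexI[of _ "inverse _"])
  have pow: "x [^]\<^bsub>G\<^esub> n = x ^ n" for n :: nat
    by (induction n) (simp_all add: G_def)
  have order: "order G = card (UNIV :: 'a set) - 1"
    using assms by (simp add: order_def G_def card_Diff_singleton)
  have "x [^]\<^bsub>G\<^esub> order G = \<one>\<^bsub>G\<^esub>"
    by (rule group.pow_order_eq_1[OF \<open>group G\<close>]) (simp add: G_def False)
  then have "x ^ (card (UNIV :: 'a set) - 1) = 1"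
    by (simp only: pow order) (simp add: G_def)
  moreover have "card (UNIV :: 'a set) = Suc (card (UNIV :: 'a set) - 1)"
    using assms finite_UNIV_card_ge_0 by fastforce
  ultimately show ?thesis
    by (metis power_Suc2 mult_1)
qed

locale field_involution =
  fixes \<sigma> :: "'a::field \<Rightarrow> 'a"
  assumes hom_add: "\<sigma> (a + b) = \<sigma> a + \<sigma> b"
    and hom_mult: "\<sigma> (a * b) = \<sigma> a * \<sigma> b"
    and involution: "\<sigma> (\<sigma> a) = a"

lemma field_involution_id: "field_involution id"
  by unfold_locales simp_all

lemma field_involution_frobenius:
  assumes "prime_power q" and card: "card (UNIV :: 'a::field set) = q ^ 2"
  shows "field_involution (\<lambda>a :: 'a. a ^ q)"
proof
  obtain p m where p: "prime p" "q = p ^ m"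
    using \<open>prime_power q\<close> unfolding prime_power_def by blast
  have finite: "finite (UNIV :: 'a set)"
    using card p by (intro card_ge_0_finite) (simp add: prime_gt_0_nat)
  have "prime CHAR('a)"
    using prime_CHAR_semidom finite_imp_CHAR_pos[OF finite] by blast
  moreover have "CHAR('a) dvd p ^ (2 * m)"
    using CHAR_dvd_CARD[where 'a = 'a] card p by (simp add: power_mult mult.commute)
  ultimately have "CHAR('a) = p"
    using p(1) prime_dvd_power primes_dvd_imp_eq by blast
  with \<open>prime CHAR('a)\<close> p(2) show "(a + b) ^ q = a ^ q + b ^ q" for a b :: 'a
    by (intro freshmans_dream') simp_all
  show "(a * b) ^ q = a ^ q * b ^ q" for a b :: 'a
    by (rule power_mult_distrib)
  show "(a ^ q) ^ q = a" for a :: 'a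
    using field_power_card_eq_self[OF finite, of a] card by (simp flip: power_mult power2_eq_square)
qed

lemma (in vector_space) dim_direct_sum:
  assumes H: "subspace H" and K: "subspace K" and HK: "H \<inter> K = {0}"
    and W: "H \<union> K \<subseteq> span W" "finite W"
  shows "dim {h + k |h k. h \<in> H \<and> k \<in> K} = dim H + dim K"
proof -
  obtain A where A: "A \<subseteq> H" "independent A" "H \<subseteq> span A" "card A = dim H"
    using basis_exists .
  obtain B where B: "B \<subseteq> K" "independent B" "K \<subseteq> span B" "card B = dim K"
    using basis_exists .
  have finite: "finite A" "finite B"
    using independent_span_bound[OF \<open>finite W\<close> A(2)] independent_span_bound[OF \<open>finite W\<close> B(2)]
      A(1) B(1) W(1) span_superset by blast+
  have disjoint: "A \<inter> B = {}"
  proof -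
    have "0 \<notin> A"
      using A(2) dependent_zero by blast
    moreover have "A \<inter> B \<subseteq> {0}"
      using A(1) B(1) HK by blast
    ultimately show ?thesis
      by blast
  qed
  have "independent (A \<union> B)"
  proof (rule independent_if_scalars_zero)
    fix u v assume sum: "(\<Sum>x\<in>A \<union> B. u x *s x) = 0" and v: "v \<in> A \<union> B"
    let ?a = "\<Sum>x\<in>A. u x *s x" and ?b = "\<Sum>x\<in>B. u x *s x"
    have "?a = - ?b"
      using sum finite disjoint by (simp add: sum.union_disjoint eq_neg_iff_add_eq_0)
    moreover have "?a \<in> H" "?b \<in> K"
      using A(1) B(1) by (auto intro!: subspace_sum subspace_scale H K)
    ultimately have "?a = 0" "?b = 0"
    proof -
      have "?a \<in> H \<inter> K"
        using \<open>?a = - ?b\<close> \<open>?a \<in> H\<close> subspace_neg[OF K \<open>?b \<in> K\<close>] by simp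
      then show "?a = 0" "?b = 0"
        using HK \<open>?a = - ?b\<close> by auto
    qed
    then show "u v = 0"
      using v independentD[OF A(2) finite(1) order.refl] independentD[OF B(2) finite(2) order.refl]
      by blast
  qed (use finite in simp)
  moreover have "A \<union> B \<subseteq> {h + k |h k. h \<in> H \<and> k \<in> K}"
    using A(1) B(1) subspace_0[OF H] subspace_0[OF K] by force
  moreover have "{h + k |h k. h \<in> H \<and> k \<in> K} \<subseteq> span (A \<union> B)"
  proof clarify
    fix h k assume "h \<in> H" "k \<in> K"
    then have "h \<in> span (A \<union> B)" "k \<in> span (A \<union> B)"
      using A(3) B(3) span_mono[of A "A \<union> B"] span_mono[of B "A \<union> B"] by auto
    then show "h + k \<in> span (A \<union> B)"
      by (rule span_add)
  qed
  ultimately have "dim {h + k |h k. h \<in> H \<and> k \<in> K} = card (A \<union> B)"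
    by (intro dim_unique) auto
  then show ?thesis
    using card_Un_disjoint[OF finite disjoint] A(4) B(4) by simp
qed

interpretation V: vector_space "sc :: 'a::field \<Rightarrow> (nat \<Rightarrow> 'a) \<Rightarrow> nat \<Rightarrow> 'a"
  by unfold_locales (auto simp: sc_def fun_eq_iff algebra_simps)

lemma sc_apply [simp]: "sc c x i = c * x i"
  by (simp add: sc_def)

lemma sum_apply: "(\<Sum>a\<in>A. f a) i = (\<Sum>a\<in>A. f a i)"
  by (induction A rule: infinite_finite_induct) auto

lemma lin_code_subspace: "lin_code I C \<Longrightarrow> V.subspace C"
  unfolding lin_code_def V.subspace_def by auto

definition unit_vec :: "nat \<Rightarrow> nat \<Rightarrow> 'a::zero_neq_one" where
  "unit_vec i = (\<lambda>j. if j = i then 1 else 0)"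

lemma sum_times_unit_vec:
  fixes c :: "nat \<Rightarrow> 'a::semiring_1"
  assumes "finite T"
  shows "(\<Sum>t\<in>T. c t * unit_vec t s) = (if s \<in> T then c s else 0)"
  using assms by (simp add: unit_vec_def if_distrib[of "(*) _"] sum.delta' cong: if_cong)

lemma vecs_subset_span_unit_vecs:
  assumes "finite I"
  shows "vecs I \<subseteq> V.span (unit_vec ` I :: (nat \<Rightarrow> 'a::field) set)"
proof
  fix x :: "nat \<Rightarrow> 'a" assume x: "x \<in> vecs I"
  have "x = (\<Sum>i\<in>I. sc (x i) (unit_vec i))"
  proof
    fix j
    show "x j = (\<Sum>i\<in>I. sc (x i) (unit_vec i)) j"
      using x assms by (simp add: sum_apply sum_times_unit_vec vecs_def)
  qed
  also have "\<dots> \<in> V.span (unit_vec ` I)"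
    by (intro V.span_sum V.span_scale V.span_base) auto
  finally show "x \<in> V.span (unit_vec ` I)" .
qed

definition information_set :: "(nat \<Rightarrow> 'a::zero) set \<Rightarrow> nat set \<Rightarrow> bool" where
  "information_set H T \<longleftrightarrow>
     (\<forall>h\<in>H. (\<forall>i\<in>T. h i = 0) \<longrightarrow> h = 0) \<and> (\<forall>c. \<exists>h\<in>H. \<forall>i\<in>T. h i = c i)"

lemma exists_coordinates_with_unit_vec_preimages:
  fixes H :: "(nat \<Rightarrow> 'a::field) set"
  assumes H: "V.subspace H" "H \<subseteq> vecs I" and I: "finite I"
  obtains T g where "T \<subseteq> I" "\<forall>h\<in>H. (\<forall>i\<in>T. h i = 0) \<longrightarrow> h = 0"
    and "\<And>t. t \<in> T \<Longrightarrow> g t \<in> H" "\<And>t s. t \<in> T \<Longrightarrow> s \<in> T \<Longrightarrow> g t s = unit_vec t s"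
proof -
  define separating where
    "separating T \<longleftrightarrow> T \<subseteq> I \<and> (\<forall>h\<in>H. (\<forall>i\<in>T. h i = 0) \<longrightarrow> h = 0)" for T
  have "separating I"
    using H(2) by (auto simp: separating_def vecs_def fun_eq_iff)
  then obtain T where T: "separating T" and least: "\<And>T'. separating T' \<Longrightarrow> card T \<le> card T'"
    using ex_has_least_nat[of separating I card] by blast
  have "finite T"
    using T I finite_subset unfolding separating_def by blast
  have "\<exists>g\<in>H. \<forall>s\<in>T. g s = unit_vec t s" if t: "t \<in> T" for t
  proof -
    have "\<not> separating (T - {t})"
      using least[of "T - {t}"] card_Diff1_less[OF \<open>finite T\<close> t] by linarith
    then obtain h where h: "h \<in> H" "\<forall>s\<in>T - {t}. h s = 0" "h \<noteq> 0"
      using T unfolding separating_def by blast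
    then have "h t \<noteq> 0"
      using T unfolding separating_def by (metis Diff_iff singletonD)
    then show ?thesis
      using h V.subspace_scale[OF H(1) h(1), of "1 / h t"]
      by (intro bexI[of _ "sc (1 / h t) h"]) (auto simp: unit_vec_def)
  qed
  then obtain g where "\<And>t. t \<in> T \<Longrightarrow> g t \<in> H \<and> (\<forall>s\<in>T. g t s = unit_vec t s)"
    by metis
  with T show ?thesis
    using that unfolding separating_def by blast
qed

lemma information_set_if_unit_vec_preimages:
  fixes H :: "(nat \<Rightarrow> 'a::field) set"
  assumes H: "V.subspace H" and T: "finite T"
    and separating: "\<forall>h\<in>H. (\<forall>i\<in>T. h i = 0) \<longrightarrow> h = 0"
    and g: "\<And>t. t \<in> T \<Longrightarrow> g t \<in> H" "\<And>t s. t \<in> T \<Longrightarrow> s \<in> T \<Longrightarrow> g t s = unit_vec t s"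
  shows "information_set H T" and "cdim H = card T"
proof -
  define interp where "interp c = (\<Sum>t\<in>T. sc (c t) (g t))" for c :: "nat \<Rightarrow> 'a"
  have interp_in: "interp c \<in> H" for c
    unfolding interp_def using g(1) by (intro V.subspace_sum[OF H] V.subspace_scale[OF H])
  have interp_on: "interp c s = c s" if "s \<in> T" for c s
    using that T g(2) by (simp add: interp_def sum_apply sum_times_unit_vec cong: sum.cong)
  show "information_set H T"
    unfolding information_set_def using separating interp_in interp_on by blast
  have "inj_on g T"
    using g(2) by (intro inj_onI) (metis unit_vec_def zero_neq_one)
  have "H \<subseteq> V.span (g ` T)"
  proof
    fix h assume "h \<in> H"
    then have "h - interp h \<in> H"
      using V.subspace_diff[OF H _ interp_in] by blast
    then have "h = interp h"
      using separating interp_on by force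
    moreover have "interp h \<in> V.span (g ` T)"
      unfolding interp_def by (intro V.span_sum V.span_scale V.span_base) auto
    ultimately show "h \<in> V.span (g ` T)"
      by simp
  qed
  moreover have "V.independent (g ` T)"
  proof (rule V.independent_if_scalars_zero)
    fix u v assume sum: "(\<Sum>x\<in>g ` T. sc (u x) x) = 0" and v: "v \<in> g ` T"
    then obtain t where t: "t \<in> T" "v = g t"
      by blast
    have "interp (u \<circ> g) = 0"
      using sum by (simp add: interp_def sum.reindex[OF \<open>inj_on g T\<close>])
    then show "u v = 0"
      using interp_on[OF t(1), of "u \<circ> g"] t by simp
  qed (use T in simp)
  ultimately show "cdim H = card T"
    unfolding cdim_def using g(1) card_image[OF \<open>inj_on g T\<close>] by (intro V.dim_unique) auto
qed

lemma exists_information_set: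
  fixes H :: "(nat \<Rightarrow> 'a::field) set"
  assumes "V.subspace H" "H \<subseteq> vecs I" "finite I"
  obtains T where "T \<subseteq> I" "information_set H T" "card T = cdim H"
proof -
  obtain T g where "T \<subseteq> I" "\<forall>h\<in>H. (\<forall>i\<in>T. h i = 0) \<longrightarrow> h = 0"
    "\<And>t. t \<in> T \<Longrightarrow> g t \<in> H" "\<And>t s. t \<in> T \<Longrightarrow> s \<in> T \<Longrightarrow> g t s = unit_vec t s"
    using exists_coordinates_with_unit_vec_preimages[OF assms] by blast
  with information_set_if_unit_vec_preimages[OF assms(1) finite_subset[OF \<open>T \<subseteq> I\<close> assms(3)]]
  show ?thesis
    using that by metis
qed

definition subcode :: "(nat \<Rightarrow> 'a::zero) set \<Rightarrow> nat set \<Rightarrow> (nat \<Rightarrow> 'a) set" where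
  "subcode C T = {x \<in> C. \<forall>i\<in>T. x i = 0}"

lemma shorten_eq_subcode: "C \<subseteq> vecs I \<Longrightarrow> shorten I C T = subcode C T"
proof -
  assume "C \<subseteq> vecs I"
  then have "(\<lambda>i. if i \<in> I - T then x i else 0) = x" if "x \<in> subcode C T" for x
    using that by (auto simp: subcode_def vecs_def fun_eq_iff)
  then show ?thesis
    unfolding shorten_def subcode_def[symmetric] by (simp cong: image_cong)
qed

lemma lin_code_subcode: "lin_code I C \<Longrightarrow> lin_code (I - T) (subcode C T)"
  unfolding lin_code_def subcode_def vecs_def by auto

lemma min_dist_le_subcode: "min_dist I C \<le> min_dist (I - T) (subcode C T)"
proof -
  have "wt (I - T) x = wt I x" if "x \<in> subcode C T" for x
  proof -
    have "{i \<in> I - T. x i \<noteq> 0} = {i \<in> I. x i \<noteq> 0}"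
      using that by (auto simp: subcode_def)
    then show ?thesis
      by (simp add: wt_def)
  qed
  then show ?thesis
    unfolding min_dist_def by (intro INF_superset_mono) (auto simp: subcode_def)
qed

lemma subcode_complement:
  assumes C: "V.subspace C" and H: "V.subspace H" "H \<subseteq> C" and T: "information_set H T"
  shows "C = {h + x |h x. h \<in> H \<and> x \<in> subcode C T}" and "H \<inter> subcode C T = {0}"
proof -
  show "C = {h + x |h x. h \<in> H \<and> x \<in> subcode C T}"
  proof (intro equalityI subsetI)
    fix c assume "c \<in> C"
    obtain h where "h \<in> H" "\<forall>i\<in>T. h i = c i"
      using T unfolding information_set_def by blast
    then have "c - h \<in> subcode C T"
      using V.subspace_diff[OF C \<open>c \<in> C\<close>] H(2) by (auto simp: subcode_def)
    then show "c \<in> {h + x |h x. h \<in> H \<and> x \<in> subcode C T}"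
      using \<open>h \<in> H\<close> by force
  qed (use H(2) V.subspace_add[OF C] in \<open>auto simp: subcode_def\<close>)
  show "H \<inter> subcode C T = {0}"
    using T V.subspace_0[OF H(1)] V.subspace_0[OF C]
    unfolding information_set_def subcode_def by auto
qed

lemma cdim_subcode:
  fixes C :: "(nat \<Rightarrow> 'a::field) set"
  assumes C: "lin_code I C" and H: "V.subspace H" "H \<subseteq> C" and T: "information_set H T"
  shows "cdim (subcode C T) = cdim C - cdim H"
proof -
  have "finite I"
    using C by (simp add: lin_code_def)
  have "H \<union> subcode C T \<subseteq> V.span (unit_vec ` I)"
    using C H(2) vecs_subset_span_unit_vecs[OF \<open>finite I\<close>] by (auto simp: lin_code_def subcode_def)
  then have "cdim {h + x |h x. h \<in> H \<and> x \<in> subcode C T} = cdim H + cdim (subcode C T)"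
    unfolding cdim_def
    by (rule V.dim_direct_sum[OF H(1) lin_code_subspace[OF lin_code_subcode[OF C]]
          subcode_complement(2)[OF lin_code_subspace[OF C] H T] _ finite_imageI[OF \<open>finite I\<close>]])
  then have "cdim C = cdim H + cdim (subcode C T)"
    using subcode_complement(1)[OF lin_code_subspace[OF C] H T] by simp
  then show ?thesis
    by simp
qed

definition sesq_ip :: "('a \<Rightarrow> 'a) \<Rightarrow> nat set \<Rightarrow> (nat \<Rightarrow> 'a::comm_ring_1) \<Rightarrow> (nat \<Rightarrow> 'a) \<Rightarrow> 'a" where
  "sesq_ip \<sigma> I x y = (\<Sum>i\<in>I. x i * \<sigma> (y i))"

definition sesq_dual :: "('a \<Rightarrow> 'a) \<Rightarrow> nat set \<Rightarrow> (nat \<Rightarrow> 'a::comm_ring_1) set \<Rightarrow> (nat \<Rightarrow> 'a) set" where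
  "sesq_dual \<sigma> I C = {y \<in> vecs I. \<forall>x\<in>C. sesq_ip \<sigma> I x y = 0}"

lemma e_dual_eq_sesq_dual: "e_dual I C = sesq_dual id I C"
  by (simp add: e_dual_def sesq_dual_def e_ip_def sesq_ip_def)

lemma h_dual_eq_sesq_dual: "h_dual q I C = sesq_dual (\<lambda>a. a ^ q) I C"
  by (simp add: h_dual_def sesq_dual_def h_ip_def sesq_ip_def)

lemma sesq_ip_add_left: "sesq_ip \<sigma> I (x + x') y = sesq_ip \<sigma> I x y + sesq_ip \<sigma> I x' y"
  by (simp add: sesq_ip_def distrib_right sum.distrib)

lemma sesq_ip_subcode:
  assumes "x \<in> subcode C T" "finite I" "T \<subseteq> I"
  shows "sesq_ip \<sigma> (I - T) x y = sesq_ip \<sigma> I x y"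
  unfolding sesq_ip_def using assms by (intro sum.mono_neutral_left) (auto simp: subcode_def)

context field_involution
begin

lemma hom_0: "\<sigma> 0 = 0"
  using hom_add[of 0 0] add_cancel_right_right by (metis add_0)

lemma hom_sum: "\<sigma> (\<Sum>i\<in>A. f i) = (\<Sum>i\<in>A. \<sigma> (f i))"
  by (induction A rule: infinite_finite_induct) (simp_all add: hom_0 hom_add)

lemma sesq_ip_swap: "sesq_ip \<sigma> I y x = \<sigma> (sesq_ip \<sigma> I x y)"
  by (simp add: sesq_ip_def hom_sum hom_mult involution mult.commute)

lemma sesq_ip_add_right: "sesq_ip \<sigma> I x (y + y') = sesq_ip \<sigma> I x y + sesq_ip \<sigma> I x y'"
  by (simp add: sesq_ip_def hom_add distrib_left sum.distrib)

lemma sesq_ip_scale_right: "sesq_ip \<sigma> I x (sc c y) = \<sigma> c * sesq_ip \<sigma> I x y"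
  by (simp add: sesq_ip_def hom_mult sum_distrib_left mult.left_commute)

lemma sesq_dual_subspace: "V.subspace (sesq_dual \<sigma> I C)"
proof -
  have "sesq_ip \<sigma> I x 0 = 0" for x
    by (simp add: sesq_ip_def hom_0)
  then show ?thesis
    unfolding V.subspace_def sesq_dual_def
    by (auto simp: sesq_ip_add_right sesq_ip_scale_right vecs_def)
qed

lemma subcode_sesq_LCD:
  assumes C: "lin_code I C" and "T \<subseteq> I"
    and T: "information_set (C \<inter> sesq_dual \<sigma> I C) T"
  shows "subcode C T \<inter> sesq_dual \<sigma> (I - T) (subcode C T) = {0}"
proof -
  let ?H = "C \<inter> sesq_dual \<sigma> I C"
  have "finite I" "C \<subseteq> vecs I"
    using C by (auto simp: lin_code_def)
  have decompose: "C = {h + x |h x. h \<in> ?H \<and> x \<in> subcode C T}"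
    using subcode_complement(1)[OF lin_code_subspace[OF C]
        V.subspace_inter[OF lin_code_subspace[OF C] sesq_dual_subspace] _ T] by blast
  have "y = 0" if y: "y \<in> subcode C T" "y \<in> sesq_dual \<sigma> (I - T) (subcode C T)" for y
  proof -
    have "sesq_ip \<sigma> I c y = 0" if "c \<in> C" for c
    proof -
      obtain h x where c: "c = h + x" and h: "h \<in> ?H" and x: "x \<in> subcode C T"
        using \<open>c \<in> C\<close> decompose by blast
      have "sesq_ip \<sigma> I h y = \<sigma> (sesq_ip \<sigma> I y h)"
        by (rule sesq_ip_swap)
      also have "\<dots> = 0"
        using h y(1) by (simp add: sesq_dual_def subcode_def hom_0)
      finally have "sesq_ip \<sigma> I h y = 0" .
      moreover have "sesq_ip \<sigma> (I - T) x y = 0"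
        using y(2) x by (simp add: sesq_dual_def)
      then have "sesq_ip \<sigma> I x y = 0"
        using sesq_ip_subcode[OF x \<open>finite I\<close> \<open>T \<subseteq> I\<close>] by simp
      ultimately show ?thesis
        by (simp add: c sesq_ip_add_left)
    qed
    then have "y \<in> ?H"
      using y(1) \<open>C \<subseteq> vecs I\<close> by (auto simp: sesq_dual_def subcode_def)
    then show "y = 0"
      using y(1) T by (simp add: information_set_def subcode_def)
  qed
  moreover have "0 \<in> subcode C T \<inter> sesq_dual \<sigma> (I - T) (subcode C T)"
    using V.subspace_0[OF lin_code_subspace[OF lin_code_subcode[OF C]]]
      V.subspace_0[OF sesq_dual_subspace] by blast
  ultimately show ?thesis
    by blast
qed

theorem shortened_hull_LCD:
  assumes C: "lin_code I C"
  shows "\<exists>T. T \<subseteq> I \<and> card T = cdim (C \<inter> sesq_dual \<sigma> I C) \<and>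
    lin_code (I - T) (shorten I C T) \<and>
    card (I - T) = card I - cdim (C \<inter> sesq_dual \<sigma> I C) \<and>
    cdim (shorten I C T) = cdim C - cdim (C \<inter> sesq_dual \<sigma> I C) \<and>
    shorten I C T \<inter> sesq_dual \<sigma> (I - T) (shorten I C T) = {0} \<and>
    min_dist (I - T) (shorten I C T) \<ge> min_dist I C"
proof -
  let ?H = "C \<inter> sesq_dual \<sigma> I C"
  have "finite I" "C \<subseteq> vecs I"
    using C by (auto simp: lin_code_def)
  have H: "V.subspace ?H" "?H \<subseteq> C"
    using V.subspace_inter[OF lin_code_subspace[OF C] sesq_dual_subspace] by auto
  obtain T where T: "T \<subseteq> I" "information_set ?H T" "card T = cdim ?H"
    using exists_information_set[OF H(1)] \<open>C \<subseteq> vecs I\<close> \<open>finite I\<close> by blast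
  then show ?thesis
    using C H finite_subset[OF T(1) \<open>finite I\<close>]
    by (intro exI[of _ T])
      (simp add: shorten_eq_subcode[OF \<open>C \<subseteq> vecs I\<close>] lin_code_subcode card_Diff_subset
        cdim_subcode subcode_sesq_LCD min_dist_le_subcode)
qed

end

theorem theorem3p2:
  fixes q :: nat
  assumes "prime_power q"
  shows "(card (UNIV :: 'a::field set) = q \<longrightarrow>
           (\<forall>(C :: (nat \<Rightarrow> 'a::field) set) n k d l.
              lin_code {..<n} C \<and> cdim C = k \<and> min_dist {..<n} C = d \<and>
              cdim (C \<inter> e_dual {..<n} C) = l \<longrightarrow>
              (\<exists>T. T \<subseteq> {..<n} \<and> card T = l \<and>
                 lin_code ({..<n} - T) (shorten {..<n} C T) \<and>
                 card ({..<n} - T) = n - l \<and>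
                 cdim (shorten {..<n} C T) = k - l \<and>
                 e_LCD ({..<n} - T) (shorten {..<n} C T) \<and>
                 min_dist ({..<n} - T) (shorten {..<n} C T) \<ge> d)))
       \<and> (card (UNIV :: 'b::field set) = q ^ 2 \<longrightarrow>
           (\<forall>(C :: (nat \<Rightarrow> 'b::field) set) n k d l.
              lin_code {..<n} C \<and> cdim C = k \<and> min_dist {..<n} C = d \<and>
              cdim (C \<inter> h_dual q {..<n} C) = l \<longrightarrow>
              (\<exists>T. T \<subseteq> {..<n} \<and> card T = l \<and>
                 lin_code ({..<n} - T) (shorten {..<n} C T) \<and>
                 card ({..<n} - T) = n - l \<and>
                 cdim (shorten {..<n} C T) = k - l \<and>
                 h_LCD q ({..<n} - T) (shorten {..<n} C T) \<and>
                 min_dist ({..<n} - T) (shorten {..<n} C T) \<ge> d)))"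
  \<comment> \<open>The Euclidean part holds over every field.\<close>
  using field_involution.shortened_hull_LCD[OF field_involution_id, where ?'a = 'a]
    field_involution.shortened_hull_LCD[OF field_involution_frobenius[OF assms], where ?'a = 'b]
  unfolding e_LCD_def h_LCD_def e_dual_eq_sesq_dual h_dual_eq_sesq_dual
  by (metis card_lessThan)

end
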